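(* Let $\Omega=\mathbb{C}[x_1,\dots,x_n]\otimes\wedge\mathbb{C}^n$ be the algebra of polynomial differential forms and let $\mathcal{I}_n$ be its ideal generated by $p_1,\dots,p_n,dp_1,\dots,dp_n$, where $p_j=\sum_ix_i^j$ and $d$ is the exterior derivative. Let $1\le r\le n$ and let $h_r(x_r,\dots,x_n)$ be the complete homogeneous symmetric polynomial of degree $r$ in the variables $x_r,\dots,x_n$. Then for $i=r,\dots,n$, \[ \frac{\partial h_r(x_r,\dots,x_n)}{\partial x_i}\,dx_r\wedge\cdots\wedge dx_n\in\mathcal{I}_n. \] *)

theory Defs
  imports "HOL-Analysis.Analysis"
begin

type_synonym pfun = "(nat \<Rightarrow> complex) \<Rightarrow> complex"
  \<comment> \<open>polynomial (functions) in variables x_1, ..., x_n; a point is x :: nat => complex\<close>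

inductive_set polyfun :: "nat \<Rightarrow> pfun set" for n :: nat where
  pconst: "(\<lambda>x. c) \<in> polyfun n"
| pvar: "1 \<le> i \<Longrightarrow> i \<le> n \<Longrightarrow> (\<lambda>x. x i) \<in> polyfun n"
| padd: "f \<in> polyfun n \<Longrightarrow> g \<in> polyfun n \<Longrightarrow> (\<lambda>x. f x + g x) \<in> polyfun n"
| pmult: "f \<in> polyfun n \<Longrightarrow> g \<in> polyfun n \<Longrightarrow> (\<lambda>x. f x * g x) \<in> polyfun n"

definition partial :: "nat \<Rightarrow> pfun \<Rightarrow> pfun" where
  "partial i f = (\<lambda>x. deriv (\<lambda>t. f (x(i := t))) (x i))"

text \<open>Differential forms: a form assigns to each index set S (standing for the basis
  element dx_S = dx_{s_1} \<and> ... \<and> dx_{s_k}, s_1 < ... < s_k) its coefficient.\<close>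
type_synonym form = "nat set \<Rightarrow> pfun"

definition Omega :: "nat \<Rightarrow> form set" where
  "Omega n = {w. (\<forall>S. w S \<in> polyfun n) \<and> (\<forall>S. \<not> S \<subseteq> {1..n} \<longrightarrow> w S = (\<lambda>x. 0))}"

definition wsign :: "nat set \<Rightarrow> nat set \<Rightarrow> complex" where
  "wsign S T = (-1) ^ card {(s, t). s \<in> S \<and> t \<in> T \<and> t < s}"

definition wedge :: "form \<Rightarrow> form \<Rightarrow> form" where
  "wedge w v = (\<lambda>U x. if finite U then
      (\<Sum>S\<in>Pow U. wsign S (U - S) * w S x * v (U - S) x) else 0)"

definition zero_form :: form where
  "zero_form = (\<lambda>U x. 0)"

definition add_form :: "form \<Rightarrow> form \<Rightarrow> form" where
  "add_form w v = (\<lambda>U x. w U x + v U x)"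

definition fun_form :: "pfun \<Rightarrow> form" where
  "fun_form f = (\<lambda>U. if U = {} then f else (\<lambda>x. 0))"

text \<open>Exterior derivative of a 0-form in n variables: df = sum_i (df/dx_i) dx_i.\<close>
definition dform :: "nat \<Rightarrow> pfun \<Rightarrow> form" where
  "dform n f = (\<lambda>U. if \<exists>i\<in>{1..n}. U = {i} then partial (THE i. U = {i}) f else (\<lambda>x. 0))"

definition power_sum :: "nat \<Rightarrow> nat \<Rightarrow> pfun" where
  "power_sum n j = (\<lambda>x. \<Sum>i=1..n. x i ^ j)"

inductive_set ideal_I :: "nat \<Rightarrow> form set" for n :: nat where
  gen_p: "1 \<le> j \<Longrightarrow> j \<le> n \<Longrightarrow> fun_form (power_sum n j) \<in> ideal_I n"
| gen_dp: "1 \<le> j \<Longrightarrow> j \<le> n \<Longrightarrow> dform n (power_sum n j) \<in> ideal_I n"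
| zero: "zero_form \<in> ideal_I n"
| add: "a \<in> ideal_I n \<Longrightarrow> b \<in> ideal_I n \<Longrightarrow> add_form a b \<in> ideal_I n"
| lmult: "w \<in> Omega n \<Longrightarrow> a \<in> ideal_I n \<Longrightarrow> wedge w a \<in> ideal_I n"
| rmult: "w \<in> Omega n \<Longrightarrow> a \<in> ideal_I n \<Longrightarrow> wedge a w \<in> ideal_I n"

definition complete_hom :: "nat \<Rightarrow> nat set \<Rightarrow> pfun" where
  "complete_hom k S = (\<lambda>x. \<Sum>\<alpha>\<in>{\<alpha>. (\<forall>i. i \<notin> S \<longrightarrow> \<alpha> i = 0) \<and> sum \<alpha> S = k}.
      \<Prod>i\<in>S. x i ^ \<alpha> i)"

end

theory Submission
  imports Defs "HOL-Computational_Algebra.Formal_Power_Series"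
begin

text \<open>The polynomials f with both f and df in I_n form, by the Leibniz rule, an ideal of the
  polynomial ring, and it contains the power sums p_1, ..., p_n. Newton's identities
  m h_m = p_1 h_(m-1) + ... + p_m h_0 show that it contains h_m(x_1, ..., x_n) for 1 <= m <= n,
  and the recurrence h_m(x_(d+1), ..., x_n) = h_m(x_d, ..., x_n) - x_d h_(m-1)(x_d, ..., x_n)
  removes the variables x_1, ..., x_(r-1) one at a time, so it contains h = h_r(x_r, ..., x_n).
  Since h involves only x_r, ..., x_n, the product of dh \<in> I_n with
  dx_r ... dx_(i-1) dx_(i+1) ... dx_n is, up to sign, (\<partial>h/\<partial>x_i) dx_r ... dx_n.\<close>

lemma polyfun_pow: "f \<in> polyfun n \<Longrightarrow> (\<lambda>x. f x ^ k) \<in> polyfun n"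
proof (induction k)
  case 0
  then show ?case by (simp add: polyfun.pconst)
next
  case (Suc k)
  then show ?case using polyfun.pmult[OF Suc.prems Suc.IH] by simp
qed

lemma polyfun_sum:
  assumes "finite A" "\<And>a. a \<in> A \<Longrightarrow> f a \<in> polyfun n"
  shows "(\<lambda>x. \<Sum>a\<in>A. f a x) \<in> polyfun n"
  using assms
proof (induction A rule: finite_induct)
  case empty
  then show ?case by (simp add: polyfun.pconst)
next
  case (insert a A)
  then show ?case using polyfun.padd[of "f a" n "\<lambda>x. \<Sum>a\<in>A. f a x"] by simp
qed

lemma polyfun_power_sum: "power_sum n j \<in> polyfun n"
  unfolding power_sum_def by (intro polyfun_sum polyfun_pow polyfun.pvar) auto

lemma field_differentiable_polyfun:
  assumes "f \<in> polyfun n"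
  shows "(\<lambda>t. f (x(i := t))) field_differentiable (at t)"
  using assms
proof (induction f)
  case (pconst c)
  then show ?case by simp
next
  case (pvar j)
  then show ?case
    by (cases "j = i") (auto simp: field_differentiable_ident field_differentiable_const)
next
  case (padd f g)
  then show ?case by (simp add: field_differentiable_add)
next
  case (pmult f g)
  then show ?case by (simp add: field_differentiable_mult)
qed

lemma partial_const: "partial i (\<lambda>x. c) = (\<lambda>x. 0)"
  by (simp add: partial_def)

lemma partial_var: "partial i (\<lambda>x. x j) = (\<lambda>x. if j = i then 1 else 0)"
  unfolding partial_def by (cases "j = i") auto

lemma partial_add:
  assumes "f \<in> polyfun n" "g \<in> polyfun n"
  shows "partial i (\<lambda>x. f x + g x) = (\<lambda>x. partial i f x + partial i g x)"
  unfolding partial_def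
  by (intro ext deriv_add field_differentiable_polyfun[OF assms(1)]
      field_differentiable_polyfun[OF assms(2)])

lemma partial_mult:
  assumes "f \<in> polyfun n" "g \<in> polyfun n"
  shows "partial i (\<lambda>x. f x * g x) = (\<lambda>x. f x * partial i g x + partial i f x * g x)"
  unfolding partial_def
  by (intro ext) (simp add: deriv_mult[OF field_differentiable_polyfun[OF assms(1)]
        field_differentiable_polyfun[OF assms(2)]])

lemma partial_eq_0_if_independent:
  assumes "\<And>x t. f (x(k := t)) = f x"
  shows "partial k f = (\<lambda>x. 0)"
  unfolding partial_def using assms by simp

lemma polyfun_partial: "f \<in> polyfun n \<Longrightarrow> partial i f \<in> polyfun n"
proof (induction f rule: polyfun.induct)
  case (pconst c)
  then show ?case by (simp add: partial_const polyfun.pconst)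
next
  case (pvar j)
  then show ?case by (simp add: partial_var polyfun.pconst)
next
  case (padd f g)
  then show ?case by (simp add: partial_add polyfun.padd)
next
  case (pmult f g)
  then show ?case by (simp add: partial_mult polyfun.padd polyfun.pmult)
qed

definition basic_form :: "pfun \<Rightarrow> nat set \<Rightarrow> form" where
  "basic_form g V = (\<lambda>U. if U = V then g else (\<lambda>x. 0))"

lemma fun_form_eq_basic_form: "fun_form g = basic_form g {}"
  by (simp add: fun_form_def basic_form_def)

lemma basic_form_Omega:
  "g \<in> polyfun n \<Longrightarrow> V \<subseteq> {1..n} \<Longrightarrow> basic_form g V \<in> Omega n"
  unfolding Omega_def basic_form_def by (auto intro: polyfun.pconst)

lemma dform_Omega: "f \<in> polyfun n \<Longrightarrow> dform n f \<in> Omega n"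
  unfolding Omega_def dform_def by (auto intro: polyfun.pconst polyfun_partial)

lemma dform_singleton: "k \<in> {1..n} \<Longrightarrow> dform n f {k} = partial k f"
  unfolding dform_def by auto

lemma wsign_mult_self: "wsign S T * wsign S T = 1"
  by (simp add: wsign_def flip: power_mult_distrib)

lemma wedge_basic_form_right:
  "wedge w (basic_form g V) U x =
     (if finite U \<and> V \<subseteq> U then wsign (U - V) V * w (U - V) x * g x else 0)"
proof (cases "finite U")
  case True
  have "wedge w (basic_form g V) U x =
      (\<Sum>S\<in>Pow U. if V \<subseteq> U \<and> S = U - V then wsign S V * w S x * g x else 0)"
    unfolding wedge_def basic_form_def if_P[OF True]
    by (rule sum.cong) auto
  also have "\<dots> = (if V \<subseteq> U then wsign (U - V) V * w (U - V) x * g x else 0)"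
    using True by (cases "V \<subseteq> U") (simp_all add: sum.delta')
  finally show ?thesis using True by simp
qed (simp add: wedge_def)

lemma wedge_fun_form_right:
  "wedge w (fun_form g) = (\<lambda>U x. if finite U then w U x * g x else 0)"
  by (intro ext) (simp add: fun_form_eq_basic_form wedge_basic_form_right wsign_def)

lemma wedge_fun_form_left:
  "wedge (fun_form g) w = (\<lambda>U x. if finite U then g x * w U x else 0)"
proof (intro ext)
  fix U x
  show "wedge (fun_form g) w U x = (if finite U then g x * w U x else 0)"
  proof (cases "finite U")
    case True
    have "wedge (fun_form g) w U x = (\<Sum>S\<in>Pow U. if S = {} then g x * w U x else 0)"
      unfolding wedge_def fun_form_def if_P[OF True]
      by (rule sum.cong) (auto simp: wsign_def)
    then show ?thesis using True by (simp add: sum.delta)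
  qed (simp add: wedge_def)
qed

text \<open>The coefficient wsign {i} (S - {i}) cancels the sign of dx_i dx_(S - {i}) = \<plusminus>dx_S.\<close>

lemma wedge_dform_complement:
  assumes "finite S" "i \<in> S" "i \<in> {1..n}"
    and independent: "\<And>k. k \<notin> S \<Longrightarrow> partial k f = (\<lambda>x. 0)"
  shows "wedge (dform n f) (basic_form (\<lambda>x. wsign {i} (S - {i})) (S - {i}))
           = basic_form (partial i f) S"
proof (intro ext)
  fix U x
  define V where "V = S - {i}"
  show "wedge (dform n f) (basic_form (\<lambda>x. wsign {i} V) V) U x = basic_form (partial i f) S U x"
  proof (cases "U = S")
    case True
    then have "U - V = {i}" "V \<subseteq> U" using assms(2) by (auto simp: V_def)
    then have "wedge (dform n f) (basic_form (\<lambda>x. wsign {i} V) V) U x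
        = wsign {i} V * wsign {i} V * partial i f x"
      using True assms by (simp add: wedge_basic_form_right dform_singleton mult_ac)
    then show ?thesis using True by (simp add: wsign_mult_self basic_form_def)
  next
    case False
    have "dform n f (U - V) = (\<lambda>x. 0)" if "V \<subseteq> U"
    proof (cases "\<exists>k\<in>{1..n}. U - V = {k}")
      case True
      then obtain k where k: "k \<in> {1..n}" "U - V = {k}" by blast
      with that have "U = insert k V" "k \<notin> V" by blast+
      with False assms(2) have "k \<notin> S" by (auto simp: V_def)
      then show ?thesis using k independent by (simp add: dform_singleton)
    qed (simp add: dform_def)
    then show ?thesis unfolding wedge_basic_form_right using False by (simp add: basic_form_def)
  qed
qed

section \<open>Complete homogeneous polynomials and Newton's identities\<close>

definition exponents :: "nat \<Rightarrow> nat set \<Rightarrow> (nat \<Rightarrow> nat) set" where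
  "exponents m S = {\<alpha>. (\<forall>i. i \<notin> S \<longrightarrow> \<alpha> i = 0) \<and> sum \<alpha> S = m}"

lemma complete_hom_exponents:
  "complete_hom m S x = (\<Sum>\<alpha>\<in>exponents m S. \<Prod>i\<in>S. x i ^ \<alpha> i)"
  by (simp add: complete_hom_def exponents_def)

lemma finite_exponents:
  assumes "finite S"
  shows "finite (exponents m S)"
proof (rule finite_subset)
  show "exponents m S \<subseteq> {\<alpha>. \<forall>i. (i \<in> S \<longrightarrow> \<alpha> i \<in> {..m}) \<and> (i \<notin> S \<longrightarrow> \<alpha> i = 0)}"
    using assms member_le_sum[of _ S] by (fastforce simp: exponents_def)
  show "finite {\<alpha>. \<forall>i. (i \<in> S \<longrightarrow> \<alpha> i \<in> {..m}) \<and> (i \<notin> S \<longrightarrow> \<alpha> i = (0::nat))}"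
    by (rule finite_set_of_finite_funs) (use assms in auto)
qed

lemma exponents_insert:
  assumes "finite S" "k \<notin> S"
  shows "exponents m (insert k S) = (\<lambda>(a, \<beta>). \<beta>(k := a)) ` (SIGMA a:{..m}. exponents (m - a) S)"
proof
  show "exponents m (insert k S) \<subseteq> (\<lambda>(a, \<beta>). \<beta>(k := a)) ` (SIGMA a:{..m}. exponents (m - a) S)"
  proof
    fix \<alpha> assume \<alpha>: "\<alpha> \<in> exponents m (insert k S)"
    have "sum (\<alpha>(k := 0)) S = sum \<alpha> S" using assms by (intro sum.cong) auto
    with \<alpha> assms have "(\<alpha> k, \<alpha>(k := 0)) \<in> (SIGMA a:{..m}. exponents (m - a) S)"
      by (auto simp: exponents_def)
    then show "\<alpha> \<in> (\<lambda>(a, \<beta>). \<beta>(k := a)) ` (SIGMA a:{..m}. exponents (m - a) S)"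
      by (rule rev_image_eqI) simp
  qed
  show "(\<lambda>(a, \<beta>). \<beta>(k := a)) ` (SIGMA a:{..m}. exponents (m - a) S) \<subseteq> exponents m (insert k S)"
  proof
    fix \<gamma> assume "\<gamma> \<in> (\<lambda>(a, \<beta>). \<beta>(k := a)) ` (SIGMA a:{..m}. exponents (m - a) S)"
    then obtain a \<beta> where "a \<le> m" "\<beta> \<in> exponents (m - a) S" "\<gamma> = \<beta>(k := a)" by auto
    moreover have "sum (\<beta>(k := a)) S = sum \<beta> S" using assms by (intro sum.cong) auto
    ultimately show "\<gamma> \<in> exponents m (insert k S)"
      using assms by (auto simp: exponents_def)
  qed
qed

lemma inj_on_exponents_insert:
  assumes "k \<notin> S"
  shows "inj_on (\<lambda>(a, \<beta>). \<beta>(k := a)) (SIGMA a:{..m}. exponents (m - a) S)"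
proof (rule inj_onI, clarify)
  fix a \<beta> a' \<beta>'
  assume "\<beta> \<in> exponents (m - a) S" "\<beta>' \<in> exponents (m - a') S" and eq: "\<beta>(k := a) = \<beta>'(k := a')"
  then have "\<beta> k = 0" "\<beta>' k = 0" using assms by (auto simp: exponents_def)
  with eq show "a = a' \<and> \<beta> = \<beta>'"
    by (metis fun_upd_idem fun_upd_same fun_upd_upd)
qed

lemma complete_hom_empty: "complete_hom m {} x = (if m = 0 then 1 else 0)"
proof -
  have "exponents m {} = (if m = 0 then {\<lambda>i. 0} else {})"
    by (auto simp: exponents_def)
  then show ?thesis by (simp add: complete_hom_exponents)
qed

lemma complete_hom_insert:
  assumes "finite S" "k \<notin> S"
  shows "complete_hom m (insert k S) x = (\<Sum>a\<le>m. x k ^ a * complete_hom (m - a) S x)"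
proof -
  have prod_upd: "(\<Prod>i\<in>insert k S. x i ^ (\<beta>(k := a)) i) = x k ^ a * (\<Prod>i\<in>S. x i ^ \<beta> i)"
    for a \<beta>
  proof -
    have "(\<Prod>i\<in>S. x i ^ (\<beta>(k := a)) i) = (\<Prod>i\<in>S. x i ^ \<beta> i)"
      using assms(2) by (intro prod.cong) auto
    then show ?thesis using assms by simp
  qed
  have "complete_hom m (insert k S) x
      = (\<Sum>(a, \<beta>)\<in>(SIGMA a:{..m}. exponents (m - a) S). \<Prod>i\<in>insert k S. x i ^ (\<beta>(k := a)) i)"
    unfolding complete_hom_exponents exponents_insert[OF assms]
    by (subst sum.reindex[OF inj_on_exponents_insert[OF assms(2)]]) (simp add: case_prod_unfold)
  also have "\<dots> = (\<Sum>a\<le>m. \<Sum>\<beta>\<in>exponents (m - a) S. x k ^ a * (\<Prod>i\<in>S. x i ^ \<beta> i))"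
    unfolding prod_upd by (rule sum.Sigma[symmetric]) (auto intro: finite_exponents assms)
  finally show ?thesis by (simp add: complete_hom_exponents sum_distrib_left)
qed

lemma complete_hom_Suc_insert:
  assumes "finite S" "k \<notin> S"
  shows "complete_hom (Suc m) (insert k S) x
           = complete_hom (Suc m) S x + x k * complete_hom m (insert k S) x"
  unfolding complete_hom_insert[OF assms]
  by (subst sum.atMost_Suc_shift) (simp add: sum_distrib_left mult.assoc)

lemma complete_hom_independent:
  "k \<notin> S \<Longrightarrow> complete_hom m S (x(k := t)) = complete_hom m S x"
  unfolding complete_hom_def by (intro sum.cong prod.cong) auto

lemma polyfun_complete_hom:
  assumes "finite S" "S \<subseteq> {1..n}"
  shows "complete_hom m S \<in> polyfun n"
  using assms
proof (induction S arbitrary: m rule: finite_induct)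
  case empty
  then show ?case
    using polyfun.pconst[of "if m = 0 then 1 else 0"] by (simp add: complete_hom_empty[abs_def])
next
  case (insert k S)
  then have "(\<lambda>x. \<Sum>a\<le>m. x k ^ a * complete_hom (m - a) S x) \<in> polyfun n"
    by (intro polyfun_sum polyfun.pmult polyfun_pow polyfun.pvar) auto
  moreover have "complete_hom m (insert k S) = (\<lambda>x. \<Sum>a\<le>m. x k ^ a * complete_hom (m - a) S x)"
    using insert by (simp add: complete_hom_insert fun_eq_iff)
  ultimately show ?case by simp
qed

text \<open>Newton's identities for complete homogeneous polynomials are proved with generating
  functions: the generating function of the h_m is the product of the geometric series
  1/(1 - x_i t), and t times its logarithmic derivative is the generating function of the
  power sums.\<close>

definition geometric_fps :: "complex \<Rightarrow> complex fps" where
  "geometric_fps y = Abs_fps (\<lambda>a. y ^ a)"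

definition power_sum_fps :: "nat set \<Rightarrow> (nat \<Rightarrow> complex) \<Rightarrow> complex fps" where
  "power_sum_fps S x = Abs_fps (\<lambda>j. if j = 0 then 0 else \<Sum>i\<in>S. x i ^ j)"

definition complete_hom_fps :: "nat set \<Rightarrow> (nat \<Rightarrow> complex) \<Rightarrow> complex fps" where
  "complete_hom_fps S x = Abs_fps (\<lambda>m. complete_hom m S x)"

lemma complete_hom_fps_empty: "complete_hom_fps {} x = 1"
  by (rule fps_ext) (simp add: complete_hom_fps_def complete_hom_empty)

lemma complete_hom_fps_insert:
  "finite S \<Longrightarrow> k \<notin> S \<Longrightarrow>
    complete_hom_fps (insert k S) x = geometric_fps (x k) * complete_hom_fps S x"
  by (rule fps_ext)
    (simp add: complete_hom_fps_def geometric_fps_def fps_mult_nth complete_hom_insert atLeast0AtMost)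

lemma power_sum_fps_insert:
  "finite S \<Longrightarrow> k \<notin> S \<Longrightarrow> power_sum_fps (insert k S) x = power_sum_fps {k} x + power_sum_fps S x"
  by (rule fps_ext) (simp add: power_sum_fps_def)

lemma fps_X_mult_deriv_nth: "fps_nth (fps_X * fps_deriv f) m = of_nat m * fps_nth f m"
  by (cases m) simp_all

lemma fps_X_deriv_geometric_fps:
  "fps_X * fps_deriv (geometric_fps (x k)) = power_sum_fps {k} x * geometric_fps (x k)"
proof (rule fps_ext)
  fix m
  have "fps_nth (power_sum_fps {k} x * geometric_fps (x k)) m = (\<Sum>j=1..m. x k ^ m)"
    unfolding fps_mult_nth power_sum_fps_def geometric_fps_def
    by (subst sum.atLeast_Suc_atMost) (auto simp: power_add[symmetric] intro!: sum.cong)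
  then show "fps_nth (fps_X * fps_deriv (geometric_fps (x k))) m
      = fps_nth (power_sum_fps {k} x * geometric_fps (x k)) m"
    by (simp add: fps_X_mult_deriv_nth geometric_fps_def)
qed

lemma fps_X_deriv_complete_hom_fps:
  "finite S \<Longrightarrow> fps_X * fps_deriv (complete_hom_fps S x) = power_sum_fps S x * complete_hom_fps S x"
proof (induction S rule: finite_induct)
  case empty
  show ?case by (rule fps_ext) (simp add: complete_hom_fps_empty power_sum_fps_def)
next
  case (insert k S)
  let ?Y = "geometric_fps (x k)" and ?H = "complete_hom_fps S x"
  have "fps_X * fps_deriv (?Y * ?H) = (power_sum_fps {k} x + power_sum_fps S x) * (?Y * ?H)"
    using fps_X_deriv_geometric_fps[of x k] insert.IH unfolding fps_deriv_mult by algebra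
  then show ?case
    unfolding complete_hom_fps_insert[OF insert.hyps] power_sum_fps_insert[OF insert.hyps] .
qed

lemma complete_hom_newton:
  assumes "finite S"
  shows "of_nat m * complete_hom m S x = (\<Sum>j=1..m. (\<Sum>i\<in>S. x i ^ j) * complete_hom (m - j) S x)"
proof -
  have "of_nat m * complete_hom m S x = fps_nth (fps_X * fps_deriv (complete_hom_fps S x)) m"
    by (simp add: fps_X_mult_deriv_nth complete_hom_fps_def)
  also have "\<dots> = fps_nth (power_sum_fps S x * complete_hom_fps S x) m"
    by (simp add: fps_X_deriv_complete_hom_fps[OF assms])
  also have "\<dots> = (\<Sum>j=1..m. (\<Sum>i\<in>S. x i ^ j) * complete_hom (m - j) S x)"
    unfolding fps_mult_nth power_sum_fps_def complete_hom_fps_def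
    by (subst sum.atLeast_Suc_atMost) (auto intro!: sum.cong)
  finally show ?thesis .
qed

section \<open>Polynomials whose differential lies in the ideal\<close>

definition ideal_pfuns :: "nat \<Rightarrow> pfun set" where
  "ideal_pfuns n = {f \<in> polyfun n. fun_form f \<in> ideal_I n \<and> dform n f \<in> ideal_I n}"

lemma power_sum_ideal_pfuns: "1 \<le> j \<Longrightarrow> j \<le> n \<Longrightarrow> power_sum n j \<in> ideal_pfuns n"
  by (simp add: ideal_pfuns_def polyfun_power_sum ideal_I.gen_p ideal_I.gen_dp)

lemma ideal_pfuns_zero: "(\<lambda>x. 0) \<in> ideal_pfuns n"
proof -
  have "fun_form (\<lambda>x. 0) = zero_form" "dform n (\<lambda>x. 0) = zero_form"
    by (auto simp: fun_form_def zero_form_def dform_def partial_const)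
  then show ?thesis by (simp add: ideal_pfuns_def ideal_I.zero polyfun.pconst)
qed

lemma ideal_pfuns_add:
  assumes "f \<in> ideal_pfuns n" "g \<in> ideal_pfuns n"
  shows "(\<lambda>x. f x + g x) \<in> ideal_pfuns n"
proof -
  have poly: "f \<in> polyfun n" "g \<in> polyfun n" using assms by (auto simp: ideal_pfuns_def)
  have "fun_form (\<lambda>x. f x + g x) = add_form (fun_form f) (fun_form g)"
    by (auto simp: fun_form_def add_form_def)
  moreover have "dform n (\<lambda>x. f x + g x) = add_form (dform n f) (dform n g)"
    by (auto simp: dform_def add_form_def partial_add[OF poly])
  ultimately show ?thesis
    using assms poly by (simp add: ideal_pfuns_def ideal_I.add polyfun.padd)
qed

lemma ideal_pfuns_mult:
  assumes "f \<in> ideal_pfuns n" "g \<in> polyfun n"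
  shows "(\<lambda>x. g x * f x) \<in> ideal_pfuns n"
proof -
  have f: "f \<in> polyfun n" "fun_form f \<in> ideal_I n" "dform n f \<in> ideal_I n"
    using assms(1) by (auto simp: ideal_pfuns_def)
  have g: "fun_form g \<in> Omega n" "dform n g \<in> Omega n"
    using assms(2) by (simp_all add: fun_form_eq_basic_form basic_form_Omega dform_Omega)
  have "fun_form (\<lambda>x. g x * f x) = wedge (fun_form g) (fun_form f)"
    unfolding wedge_fun_form_left by (simp add: fun_form_def fun_eq_iff)
  moreover have "dform n (\<lambda>x. g x * f x)
      = add_form (wedge (fun_form g) (dform n f)) (wedge (dform n g) (fun_form f))"
    unfolding wedge_fun_form_left wedge_fun_form_right add_form_def dform_def
    using partial_mult[OF assms(2) f(1)] by (auto intro!: ext)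
  ultimately show ?thesis
    using f g assms(2)
    by (simp add: ideal_pfuns_def polyfun.pmult ideal_I.add ideal_I.lmult ideal_I.rmult)
qed

lemma ideal_pfuns_sum:
  assumes "finite A" "\<And>a. a \<in> A \<Longrightarrow> f a \<in> ideal_pfuns n"
  shows "(\<lambda>x. \<Sum>a\<in>A. f a x) \<in> ideal_pfuns n"
  using assms
proof (induction A rule: finite_induct)
  case empty
  then show ?case by (simp add: ideal_pfuns_zero)
next
  case (insert a A)
  then show ?case using ideal_pfuns_add[of "f a" n "\<lambda>x. \<Sum>a\<in>A. f a x"] by simp
qed

lemma complete_hom_ideal_pfuns:
  assumes "1 \<le> m" "m \<le> n"
  shows "complete_hom m {1..n} \<in> ideal_pfuns n"
proof -
  have "(\<lambda>x. \<Sum>j=1..m. complete_hom (m - j) {1..n} x * power_sum n j x) \<in> ideal_pfuns n"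
    using assms
    by (intro ideal_pfuns_sum ideal_pfuns_mult power_sum_ideal_pfuns polyfun_complete_hom) auto
  from ideal_pfuns_mult[OF this polyfun.pconst[where c = "1 / of_nat m"]]
  have "(\<lambda>x. 1 / of_nat m * (\<Sum>j=1..m. complete_hom (m - j) {1..n} x * power_sum n j x))
      \<in> ideal_pfuns n" .
  moreover have "(\<Sum>j=1..m. complete_hom (m - j) {1..n} x * power_sum n j x)
      = of_nat m * complete_hom m {1..n} x" for x
    by (simp add: complete_hom_newton power_sum_def mult.commute)
  ultimately show ?thesis using assms by simp
qed

lemma complete_hom_tail_ideal_pfuns:
  assumes "1 \<le> d" "d \<le> m" "m \<le> n"
  shows "complete_hom m {d..n} \<in> ideal_pfuns n"
  using assms
proof (induction d arbitrary: m rule: nat_induct_at_least)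
  case base
  then show ?case by (rule complete_hom_ideal_pfuns)
next
  case (Suc d)
  then obtain m' where m: "m = Suc m'" by (cases m) auto
  have split: "{d..n} = insert d {Suc d..n}" using Suc by auto
  have "complete_hom m {d..n} \<in> ideal_pfuns n" "complete_hom m' {d..n} \<in> ideal_pfuns n"
    using Suc m by (auto intro!: Suc.IH)
  moreover have "(\<lambda>x. (-1) * x d) \<in> polyfun n"
    using Suc by (intro polyfun.pmult polyfun.pconst polyfun.pvar) auto
  ultimately have "(\<lambda>x. complete_hom m {d..n} x + (-1) * x d * complete_hom m' {d..n} x)
      \<in> ideal_pfuns n"
    by (intro ideal_pfuns_add ideal_pfuns_mult)
  moreover have "complete_hom m {d..n} x + (-1) * x d * complete_hom m' {d..n} x
      = complete_hom m {Suc d..n} x" for x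
    unfolding m split by (simp add: complete_hom_Suc_insert)
  ultimately show ?case by simp
qed

theorem lemma18:
  fixes n r i :: nat
  assumes "1 \<le> r" and "r \<le> n" and "r \<le> i" and "i \<le> n"
  shows "(\<lambda>U. if U = {r..n} then partial i (complete_hom r {r..n}) else (\<lambda>x. 0))
           \<in> ideal_I n"
proof -
  let ?h = "complete_hom r {r..n}"
  let ?c = "\<lambda>x. wsign {i} ({r..n} - {i})"
  have "dform n ?h \<in> ideal_I n"
    using complete_hom_tail_ideal_pfuns[of r r n] assms by (simp add: ideal_pfuns_def)
  moreover have "basic_form ?c ({r..n} - {i}) \<in> Omega n"
    using assms by (intro basic_form_Omega polyfun.pconst) auto
  ultimately have "wedge (dform n ?h) (basic_form ?c ({r..n} - {i})) \<in> ideal_I n"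
    by (rule ideal_I.rmult[rotated])
  moreover have "wedge (dform n ?h) (basic_form ?c ({r..n} - {i})) = basic_form (partial i ?h) {r..n}"
    using assms
    by (intro wedge_dform_complement partial_eq_0_if_independent complete_hom_independent) auto
  ultimately show ?thesis by (simp add: basic_form_def)
qed

end
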